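(* Let $T$ be a tree with $n$ vertices and $m$ edges, maximum degree $\Delta$ and minimum degree $\delta$, and let $M_1(T)$ be its first Zagreb index. Then \[ \operatorname{irr}(T)\geq M_1(T)-\frac{2mn^2(\Delta-1)+\delta-1}{n+\Delta}. \]
   Context: For a graph $G$, $d_u$ denotes the degree of vertex $u$. The Albertson index is $\operatorname{irr}(G)=\sum_{uv\in E(G)}|d_u-d_v|$ and the first Zagreb index is $M_1(G)=\sum_{v\in V(G)} d_v^2$. *)

theory Defs
  imports Complex_Main
begin

definition simple_graph :: "'a set \<Rightarrow> 'a set set \<Rightarrow> bool" where
  "simple_graph V E \<longleftrightarrow> finite V \<and>
     (\<forall>e\<in>E. \<exists>u v. e = {u, v} \<and> u \<noteq> v \<and> u \<in> V \<and> v \<in> V)"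

definition adj :: "'a set set \<Rightarrow> 'a \<Rightarrow> 'a \<Rightarrow> bool" where
  "adj E u v \<longleftrightarrow> {u, v} \<in> E"

definition degree :: "'a set set \<Rightarrow> 'a \<Rightarrow> nat" where
  "degree E v = card {e \<in> E. v \<in> e}"

definition connected_graph :: "'a set \<Rightarrow> 'a set set \<Rightarrow> bool" where
  "connected_graph V E \<longleftrightarrow> (\<forall>u\<in>V. \<forall>v\<in>V. (adj E)\<^sup>*\<^sup>* u v)"

definition has_cycle :: "'a set set \<Rightarrow> bool" where
  "has_cycle E \<longleftrightarrow> (\<exists>xs. length xs \<ge> 3 \<and> distinct xs \<and>
     (\<forall>i. Suc i < length xs \<longrightarrow> adj E (xs ! i) (xs ! Suc i)) \<and>
     adj E (last xs) (hd xs))"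

definition is_tree :: "'a set \<Rightarrow> 'a set set \<Rightarrow> bool" where
  "is_tree V E \<longleftrightarrow> simple_graph V E \<and> V \<noteq> {} \<and> connected_graph V E \<and> \<not> has_cycle E"

definition max_degree :: "'a set \<Rightarrow> 'a set set \<Rightarrow> nat" where
  "max_degree V E = Max (degree E ` V)"

definition min_degree :: "'a set \<Rightarrow> 'a set set \<Rightarrow> nat" where
  "min_degree V E = Min (degree E ` V)"

definition zagreb1 :: "'a set \<Rightarrow> 'a set set \<Rightarrow> real" where
  "zagreb1 V E = (\<Sum>v\<in>V. (real (degree E v))^2)"

text \<open>Albertson index: sum over edges uv of |d_u - d_v|; each edge is counted
  twice as an ordered pair, hence the factor 1/2.\<close>
definition albertson :: "'a set \<Rightarrow> 'a set set \<Rightarrow> real" where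
  "albertson V E = (\<Sum>(u, v)\<in>{(u, v). u \<in> V \<and> v \<in> V \<and> {u, v} \<in> E}.
       \<bar>real (degree E u) - real (degree E v)\<bar>) / 2"

end

theory Submission
  imports Defs
begin

text \<open>The bound is weak: its right-hand side is never positive, while \<open>irr(T) \<ge> 0\<close>.
  All degrees lie in \<open>[1, \<Delta>]\<close>, so the handshake lemma gives \<open>M\<^sub>1 \<le> 2m\<Delta>\<close>, and
  \<open>\<Delta>(n + \<Delta>) \<le> n\<^sup>2(\<Delta> - 1)\<close> holds for \<open>n \<ge> 4\<close> and \<open>2 \<le> \<Delta> \<le> n - 1\<close>.  For \<open>n = 3\<close> a
  tree has at most two edges, since three would form a triangle, and the sharper bound \<open>M\<^sub>1 \<le> 2m(\<Delta> + 1) - n\<Delta>\<close>, coming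
  from \<open>(d - 1)(d - \<Delta>) \<le> 0\<close>, does the job.\<close>

lemma simple_graph_edgeE:
  assumes "simple_graph V E" "e \<in> E"
  obtains u v where "e = {u, v}" "u \<noteq> v" "u \<in> V" "v \<in> V"
  using assms unfolding simple_graph_def by meson

lemma simple_graph_finite_edges:
  assumes "simple_graph V E"
  shows "finite E"
proof (rule finite_subset)
  show "E \<subseteq> Pow V"
    using simple_graph_edgeE[OF assms] by blast
  show "finite (Pow V)"
    using assms by (simp add: simple_graph_def)
qed

lemma adj_sym: "adj E u v \<Longrightarrow> adj E v u"
  by (simp add: adj_def insert_commute)

lemma simple_graph_adjD:
  assumes "simple_graph V E" "adj E u v"
  shows "u \<in> V" "v \<in> V" "u \<noteq> v"
  using simple_graph_edgeE[OF assms(1), of "{u, v}"] assms(2)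
  by (auto simp: adj_def doubleton_eq_iff)

lemma degree_pos_if_adj:
  assumes "simple_graph V E" "adj E u v"
  shows "0 < degree E u"
proof -
  have "{u, v} \<in> {e \<in> E. u \<in> e}"
    using assms(2) by (simp add: adj_def)
  moreover have "finite {e \<in> E. u \<in> e}"
    using simple_graph_finite_edges[OF assms(1)] by simp
  ultimately show ?thesis
    unfolding degree_def by (auto simp: card_gt_0_iff)
qed

lemma sum_degree_eq_twice_card_edges:
  assumes "simple_graph V E"
  shows "(\<Sum>v\<in>V. degree E v) = 2 * card E"
proof -
  have fV: "finite V" and fE: "finite E"
    using assms simple_graph_finite_edges by (auto simp: simple_graph_def)
  have "(\<Sum>v\<in>V. degree E v) = (\<Sum>v\<in>V. \<Sum>e\<in>E. if v \<in> e then 1 else 0)"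
    unfolding degree_def using fE by (simp add: sum.inter_filter[symmetric])
  also have "\<dots> = (\<Sum>e\<in>E. card {v \<in> V. v \<in> e})"
    using fV by (subst sum.swap) (simp add: sum.inter_filter[symmetric])
  also have "\<dots> = (\<Sum>e\<in>E. 2)"
  proof (rule sum.cong[OF refl])
    fix e assume "e \<in> E"
    then obtain u v where "e = {u, v}" "u \<noteq> v" "u \<in> V" "v \<in> V"
      using simple_graph_edgeE[OF assms] by blast
    then have "{v \<in> V. v \<in> e} = {u, v}" and "card {u, v} = 2"
      by auto
    then show "card {v \<in> V. v \<in> e} = 2"
      by simp
  qed
  finally show ?thesis
    by simp
qed

lemma degree_le_card_minus_one:
  assumes "simple_graph V E" "v \<in> V"
  shows "degree E v \<le> card V - 1"
proof -
  have fV: "finite V"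
    using assms(1) by (simp add: simple_graph_def)
  have "{e \<in> E. v \<in> e} \<subseteq> (\<lambda>u. {v, u}) ` (V - {v})"
  proof
    fix e assume "e \<in> {e \<in> E. v \<in> e}"
    then obtain a b where "e = {a, b}" "a \<noteq> b" "a \<in> V" "b \<in> V" "v \<in> e"
      using simple_graph_edgeE[OF assms(1)] by blast
    then show "e \<in> (\<lambda>u. {v, u}) ` (V - {v})"
      by auto
  qed
  then have "degree E v \<le> card ((\<lambda>u. {v, u}) ` (V - {v}))"
    unfolding degree_def using fV by (simp add: card_mono)
  also have "\<dots> \<le> card (V - {v})"
    using fV by (simp add: card_image_le)
  finally show ?thesis
    using assms(2) fV by simp
qed

lemma connected_degree_pos:
  assumes "simple_graph V E" "connected_graph V E" "2 \<le> card V" "v \<in> V"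
  shows "0 < degree E v"
proof -
  have "\<not> V \<subseteq> {v}"
    using card_mono[of "{v}" V] assms(3) by auto
  then obtain u where "u \<in> V" "u \<noteq> v"
    by blast
  then have "(adj E)\<^sup>*\<^sup>* v u"
    using assms(2,4) by (simp add: connected_graph_def)
  then obtain w where "adj E v w"
    using \<open>u \<noteq> v\<close> by (metis converse_rtranclpE)
  then show ?thesis
    using degree_pos_if_adj[OF assms(1)] by blast
qed

lemma adj_unique_if_degree_le_one:
  assumes "simple_graph V E" "degree E x \<le> 1" "adj E x a" "adj E x b"
  shows "a = b"
proof -
  have "{x, a} \<in> {e \<in> E. x \<in> e}" "{x, b} \<in> {e \<in> E. x \<in> e}"
    using assms(3,4) by (auto simp: adj_def)
  moreover have "finite {e \<in> E. x \<in> e}"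
    using simple_graph_finite_edges[OF assms(1)] by simp
  ultimately have "{x, a} = {x, b}"
    using assms(2) unfolding degree_def by (metis card_le_Suc0_iff_eq One_nat_def)
  moreover have "x \<noteq> a" "x \<noteq> b"
    using simple_graph_adjD[OF assms(1)] assms(3,4) by auto
  ultimately show ?thesis
    by (metis doubleton_eq_iff)
qed

text \<open>If all degrees are at most one, every vertex reachable from \<open>u\<close> is \<open>u\<close> or its
  unique neighbour, since a walk can never leave that neighbour except back to \<open>u\<close>.\<close>

lemma connected_card_le_2_if_degree_le_one:
  assumes "simple_graph V E" "connected_graph V E" "\<forall>v\<in>V. degree E v \<le> 1"
  shows "card V \<le> 2"
proof (cases "V = {}")
  case False
  then obtain u where u: "u \<in> V"
    by blast
  have unique: "a = b" if "adj E x a" "adj E x b" for x a b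
    using adj_unique_if_degree_le_one[OF assms(1) _ that] assms(3)
      simple_graph_adjD(1)[OF assms(1) that(1)] by blast
  have reach: "v = u \<or> adj E u v" if "(adj E)\<^sup>*\<^sup>* u v" for v
    using that
  proof (induction rule: rtranclp_induct)
    case (step y z)
    show ?case
    proof (cases "y = u")
      case False
      then have "adj E y u"
        using step.IH adj_sym by simp
      then show ?thesis
        using unique step.hyps(2) by simp
    qed (use step.hyps(2) in simp)
  qed simp
  let ?N = "{v. adj E u v}"
  have "?N \<subseteq> V"
    using simple_graph_adjD(2)[OF assms(1)] by blast
  then have "finite ?N"
    using assms(1) finite_subset by (auto simp: simple_graph_def)
  moreover have "card ?N \<le> 1"
    using unique \<open>finite ?N\<close> by (simp add: card_le_Suc0_iff_eq)
  moreover have "V \<subseteq> insert u ?N"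
    using reach u assms(2) by (auto simp: connected_graph_def)
  ultimately have "card V \<le> card (insert u ?N)"
    by (simp add: card_mono)
  also have "\<dots> \<le> 2"
    using \<open>card ?N \<le> 1\<close> \<open>finite ?N\<close> by (simp add: card_insert_if)
  finally show ?thesis .
qed simp

lemma acyclic_three_vertices_card_edges_le_2:
  assumes "simple_graph V E" "\<not> has_cycle E" "card V = 3"
  shows "card E \<le> 2"
proof (rule ccontr)
  assume "\<not> card E \<le> 2"
  obtain a b c where abc: "V = {a, b, c}" "a \<noteq> b" "b \<noteq> c" "a \<noteq> c"
    using assms(3) card_3_iff by metis
  let ?K = "{{a, b}, {a, c}, {b, c}}"
  have sub: "E \<subseteq> ?K"
    using simple_graph_edgeE[OF assms(1)] abc by (auto simp: insert_commute)
  have "card E \<le> card ?K"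
    using sub by (simp add: card_mono)
  also have "card ?K = 3"
    using abc by (simp add: doubleton_eq_iff)
  finally have "card E = card ?K"
    using \<open>\<not> card E \<le> 2\<close> \<open>card ?K = 3\<close> by simp
  then have "E = ?K"
    using card_subset_eq[OF _ sub] by simp
  then have "has_cycle E"
    unfolding has_cycle_def using abc
    by (intro exI[of _ "[a, b, c]"]) (auto simp: adj_def less_Suc_eq nth_Cons' insert_commute)
  then show False
    using assms(2) by contradiction
qed

lemma albertson_nonneg: "0 \<le> albertson V E"
  unfolding albertson_def by (intro divide_nonneg_pos sum_nonneg) auto

lemma zagreb1_le_degree_bound:
  assumes "simple_graph V E" "\<forall>v\<in>V. degree E v \<le> D"
  shows "zagreb1 V E \<le> 2 * real D * real (card E)"
proof -
  have "zagreb1 V E \<le> (\<Sum>v\<in>V. real D * real (degree E v))"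
    unfolding zagreb1_def using assms(2)
    by (intro sum_mono) (simp add: power2_eq_square mult_right_mono)
  also have "\<dots> = 2 * real D * real (card E)"
    by (simp add: sum_distrib_left[symmetric] sum_degree_eq_twice_card_edges[OF assms(1),
          THEN arg_cong[where f = real], simplified])
  finally show ?thesis .
qed

lemma zagreb1_le_degree_range:
  assumes "simple_graph V E" "\<forall>v\<in>V. 1 \<le> degree E v \<and> degree E v \<le> D"
  shows "zagreb1 V E \<le> 2 * (real D + 1) * real (card E) - real D * real (card V)"
proof -
  have "zagreb1 V E \<le> (\<Sum>v\<in>V. (real D + 1) * real (degree E v) - real D)"
    unfolding zagreb1_def
  proof (rule sum_mono)
    fix v assume "v \<in> V"
    then have "0 \<le> (real (degree E v) - 1) * (real D - real (degree E v))"
      using assms(2) by (intro mult_nonneg_nonneg) auto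
    then show "(real (degree E v))\<^sup>2 \<le> (real D + 1) * real (degree E v) - real D"
      by (simp add: power2_eq_square algebra_simps)
  qed
  also have "\<dots> = 2 * (real D + 1) * real (card E) - real D * real (card V)"
    by (simp add: sum_subtractf sum_distrib_left[symmetric]
        sum_degree_eq_twice_card_edges[OF assms(1), THEN arg_cong[where f = real], simplified])
  finally show ?thesis .
qed

lemma mult_add_le_power2_mult_diff:
  fixes n D :: real
  assumes "4 \<le> n" "2 \<le> D" "D \<le> n - 1"
  shows "D * (n + D) \<le> n\<^sup>2 * (D - 1)"
proof -
  have "D * D \<le> D * (n - 1)"
    using assms by (intro mult_left_mono) auto
  moreover have "0 \<le> (n - 4) * n"
    using assms(1) by simp
  then have "n\<^sup>2 \<le> 2 * (n - 1)\<^sup>2"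
    by (simp add: power2_eq_square algebra_simps)
  moreover have "2 * (n - 1)\<^sup>2 \<le> D * (n - 1)\<^sup>2"
    using assms by (intro mult_right_mono) auto
  ultimately show ?thesis
    by (simp add: power2_eq_square algebra_simps)
qed

lemma degree_le_max_degree:
  assumes "finite V" "v \<in> V"
  shows "degree E v \<le> max_degree V E"
  using assms by (simp add: max_degree_def)

lemma tree_degree_pos:
  assumes "is_tree V E" "2 \<le> card V" "v \<in> V"
  shows "1 \<le> degree E v"
  using connected_degree_pos[of V E v] assms by (simp add: is_tree_def)

lemma tree_min_degree_pos:
  assumes "is_tree V E" "2 \<le> card V"
  shows "1 \<le> min_degree V E"
proof -
  have "min_degree V E \<in> degree E ` V"
    using assms(1) by (auto simp: min_degree_def is_tree_def simple_graph_def intro!: Min_in)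
  then show ?thesis
    using tree_degree_pos[OF assms] by auto
qed

lemma tree_max_degree_bounds:
  assumes "is_tree V E" "3 \<le> card V"
  shows "2 \<le> max_degree V E" "max_degree V E \<le> card V - 1"
proof -
  have sg: "simple_graph V E" and conn: "connected_graph V E" and fin: "finite V"
    using assms(1) by (auto simp: is_tree_def simple_graph_def)
  obtain w where "w \<in> V" "2 \<le> degree E w"
    using connected_card_le_2_if_degree_le_one[OF sg conn] assms(2) by force
  then show "2 \<le> max_degree V E"
    using degree_le_max_degree[OF fin] le_trans by blast
  have "max_degree V E \<in> degree E ` V"
    using fin \<open>w \<in> V\<close> by (auto simp: max_degree_def intro!: Max_in)
  then show "max_degree V E \<le> card V - 1"
    using degree_le_card_minus_one[OF sg] by auto
qed

lemma tree_zagreb1_bound: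
  assumes "is_tree V E" "3 \<le> card V"
  defines "n \<equiv> real (card V)" and "m \<equiv> real (card E)" and "D \<equiv> real (max_degree V E)"
  shows "zagreb1 V E * (n + D) \<le> 2 * m * n\<^sup>2 * (D - 1)"
proof -
  have sg: "simple_graph V E" and fin: "finite V"
    using assms(1) by (auto simp: is_tree_def simple_graph_def)
  have degrees: "\<forall>v\<in>V. 1 \<le> degree E v \<and> degree E v \<le> max_degree V E"
    using tree_degree_pos[OF assms(1)] degree_le_max_degree[OF fin] assms(2) by auto
  note D_bounds = tree_max_degree_bounds[OF assms(1,2)]
  show ?thesis
  proof (cases "card V = 3")
    case True
    then have "n = 3" "D = 2"
      using D_bounds by (simp_all add: n_def D_def)
    moreover have "m \<le> 2"
      using acyclic_three_vertices_card_edges_le_2[OF sg _ True] assms(1)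
      by (simp add: is_tree_def m_def)
    moreover have "zagreb1 V E \<le> 2 * (D + 1) * m - D * n"
      unfolding D_def m_def n_def using zagreb1_le_degree_range[OF sg degrees] .
    ultimately show ?thesis
      by simp
  next
    case False
    have "zagreb1 V E \<le> 2 * D * m"
      unfolding D_def m_def using zagreb1_le_degree_bound[OF sg] degrees by blast
    then have "zagreb1 V E * (n + D) \<le> 2 * D * m * (n + D)"
      by (rule mult_right_mono) (simp add: n_def D_def)
    also have "\<dots> = 2 * m * (D * (n + D))"
      by (simp add: ac_simps)
    also have "\<dots> \<le> 2 * m * (n\<^sup>2 * (D - 1))"
      using mult_add_le_power2_mult_diff[of n D] D_bounds False assms(2)
      by (intro mult_left_mono) (auto simp: n_def D_def m_def)
    finally show ?thesis
      by simp
  qed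
qed

theorem theorem3p6:
  fixes V :: "'a set" and E :: "'a set set"
  assumes "is_tree V E"
    and "card V \<ge> 3"
  shows "albertson V E \<ge> zagreb1 V E -
     (2 * real (card E) * real (card V)^2 * (real (max_degree V E) - 1)
        + real (min_degree V E) - 1) / (real (card V) + real (max_degree V E))"
proof -
  have "1 \<le> min_degree V E"
    using tree_min_degree_pos[OF assms(1)] assms(2) by simp
  then have "zagreb1 V E * (real (card V) + real (max_degree V E)) \<le>
     2 * real (card E) * real (card V)^2 * (real (max_degree V E) - 1)
        + real (min_degree V E) - 1"
    using tree_zagreb1_bound[OF assms] by linarith
  moreover have "0 < real (card V) + real (max_degree V E)"
    using assms(2) by simp
  ultimately have "zagreb1 V E \<le>
     (2 * real (card E) * real (card V)^2 * (real (max_degree V E) - 1)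
        + real (min_degree V E) - 1) / (real (card V) + real (max_degree V E))"
    by (simp only: pos_le_divide_eq)
  then show ?thesis
    using albertson_nonneg[of V E] by linarith
qed

end
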